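(* Let $m\geqslant 8$ with $m\equiv 0\pmod 4$, $d=(m-2)/2$, and $f(x)=x^{m-1}$. For every $\alpha\in\mathbb F_{2^n}^*$, the polynomial $(L_\alpha f)'$ has exactly $(d-1)/2$ distinct double roots in $\overline{\mathbb F}_2$, namely $\tau_1,\dots,\tau_{(d-1)/2}$ given by $\tau_i=\frac{\alpha^2}{1+\theta_i}+\frac{\alpha^2}{1+\theta_i^2}$, where $\theta_1,\dots,\theta_{(d-1)/2}$ are $(d-1)/2$ distinct $d$-th roots of unity in $\overline{\mathbb F}_2\setminus\{1\}$ chosen such that $\theta_i\theta_j\neq 1$ for $i\neq j$.
   Context: $D_\alpha f(x)=f(x+\alpha)+f(x)$. For $m\equiv 0\pmod 4$, $d=(m-2)/2$ and $f$ of degree at most $m$, $L_\alpha f$ is the unique polynomial of degree at most $d$ such that $(L_\alpha f)(x(x+\alpha))=D_\alpha f(x)$. *)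

theory Defs
  imports "HOL-Computational_Algebra.Polynomial"
begin

definition Dpoly :: "'a::comm_ring_1 poly \<Rightarrow> 'a \<Rightarrow> 'a poly" where
  "Dpoly f \<alpha> = pcompose f [:\<alpha>, 1:] + f"

definition Lpoly :: "'a::comm_ring_1 poly \<Rightarrow> 'a \<Rightarrow> nat \<Rightarrow> 'a poly" where
  "Lpoly f \<alpha> d = (THE g. degree g \<le> d \<and> pcompose g [:0, \<alpha>, 1:] = Dpoly f \<alpha>)"

end

theory Submission
  imports Defs
begin

text \<open>In characteristic 2 put u = x + \<alpha> and v = x, so that u + v = \<alpha> and u v = x (x + \<alpha>).
  Then D_\<alpha> x^k = u^k + v^k is the Dickson polynomial D_k(\<alpha>, y) at y = x (x + \<alpha>), hence
  L_\<alpha> x^(m-1) = D_(2d+1). Differentiating D_(2d+1)(x (x + \<alpha>)) = u^(2d+1) + v^(2d+1) gives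
  \<alpha> D_(2d+1)' = D_d^2, and D_d has only simple roots because d is odd, so the double roots of
  (L_\<alpha> f)' are exactly the roots of D_d. Every value x (x + \<alpha>) with ((x + \<alpha>) / x)^d = 1 is a
  root; x = \<alpha> / (1 + \<theta>_i) gives \<tau>_i. The conditions on the \<theta>_i make the \<tau>_i distinct, and
  deg D_d \<le> (d - 1) / 2 leaves no room for other roots.\<close>

lemma char2_minus: "(2::'a::comm_ring_1) = 0 \<Longrightarrow> - (x::'a) = x"
  by (metis add_eq_0_iff mult_2 mult_zero_left)

lemma char2_add_eq_0_iff: "(2::'a::comm_ring_1) = 0 \<Longrightarrow> (x::'a) + y = 0 \<longleftrightarrow> x = y"
  by (metis add_eq_0_iff char2_minus)

lemma char2_power2_add: "(2::'a::comm_ring_1) = 0 \<Longrightarrow> ((x::'a) + y) ^ 2 = x ^ 2 + y ^ 2"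
  by (simp add: power2_sum)

lemma char2_poly: "(2::'a::comm_ring_1) = 0 \<Longrightarrow> (2::'a poly) = 0"
  by (metis of_nat_numeral of_nat_poly pCons_0_0)

lemma pcompose_power: "pcompose (p ^ n) r = pcompose p r ^ n"
  for p r :: "'a::comm_semiring_1 poly"
  by (induct n) (simp_all add: pcompose_mult pcompose_1)

lemma pcompose_monom_1: "pcompose (monom 1 n) r = r ^ n"
  for r :: "'a::comm_semiring_1 poly"
  by (simp add: monom_altdef pcompose_power pcompose_pCons)

text \<open>The Dickson polynomial D_k(a, y) as a polynomial in y; it satisfies D_k(u + v, u v) = u^k + v^k.\<close>

fun dickson :: "'a::comm_ring_1 \<Rightarrow> nat \<Rightarrow> 'a poly" where
  "dickson a 0 = 2"
| "dickson a (Suc 0) = [:a:]"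
| "dickson a (Suc (Suc k)) = smult a (dickson a (Suc k)) - [:0, 1:] * dickson a k"

lemma degree_dickson: "degree (dickson a k) \<le> k div 2"
proof (induction a k rule: dickson.induct)
  case (3 a k)
  have "degree (smult a (dickson a (Suc k))) \<le> Suc (Suc k) div 2"
    using 3(1) degree_smult_le[of a "dickson a (Suc k)"] by linarith
  moreover have "degree ([:0, 1:] * dickson a k) \<le> Suc (Suc k) div 2"
    using 3(2) degree_mult_le[of "[:0, 1::'a:]" "dickson a k"] by simp
  ultimately show ?case by (simp add: degree_diff_le)
qed simp_all

lemma pcompose_dickson:
  "pcompose (dickson a k) [:0, -a, -1:] = [:a, 1:] ^ k + [:0, -1:] ^ k"
proof (induction a k rule: dickson.induct)
  case (1 a)
  show ?case by (simp add: numeral_poly)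
next
  case (3 a k)
  define q u v where "q = [:0, -a, -1:]" and "u = [:a, 1:]" and "v = [:0, -1::'a:]"
  have uv: "pcompose [:0, 1:] q = u * v" by (simp add: q_def u_def v_def pcompose_pCons)
  have sa: "smult a p = (u + v) * p" for p by (simp add: u_def v_def)
  have "pcompose (dickson a (Suc (Suc k))) q
      = smult a (pcompose (dickson a (Suc k)) q) - pcompose [:0, 1:] q * pcompose (dickson a k) q"
    by (simp only: dickson.simps pcompose_diff pcompose_smult pcompose_mult)
  also have "\<dots> = (u + v) * (u ^ Suc k + v ^ Suc k) - u * v * (u ^ k + v ^ k)"
    by (simp only: 3[folded q_def u_def v_def] sa uv)
  also have "\<dots> = u ^ Suc (Suc k) + v ^ Suc (Suc k)"
    by (simp add: algebra_simps)
  finally show ?case by (simp add: q_def u_def v_def)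
qed (simp add: one_pCons)

lemma pcompose_dickson_char2:
  fixes a :: "'a::comm_ring_1"
  assumes "(2::'a) = 0"
  shows "pcompose (dickson a k) [:0, a, 1:] = [:a, 1:] ^ k + [:0, 1:] ^ k"
proof -
  have "- a = a" and "- 1 = (1::'a)" using char2_minus[OF assms] by blast+
  then show ?thesis using pcompose_dickson[of a k] by (simp only:)
qed

lemma Dpoly_monom_1: "Dpoly (monom 1 k) a = [:a, 1:] ^ k + [:0, 1:] ^ k"
  unfolding Dpoly_def pcompose_monom_1 by (simp add: monom_altdef)

lemma Lpoly_eqI:
  fixes f g :: "'a::idom poly"
  assumes "degree g \<le> d" and "pcompose g [:0, a, 1:] = Dpoly f a"
  shows "Lpoly f a d = g"
  unfolding Lpoly_def
proof (rule the_equality)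
  fix h assume h: "degree h \<le> d \<and> pcompose h [:0, a, 1:] = Dpoly f a"
  have "pcompose (h - g) [:0, a, 1:] = 0"
    using h assms(2) by (simp add: pcompose_diff)
  then show "h = g" using pcompose_eq_0[of "h - g"] by simp
qed (use assms in simp)

lemma Lpoly_monom_1_char2:
  fixes a :: "'a::idom"
  assumes "(2::'a) = 0" and "k div 2 \<le> d"
  shows "Lpoly (monom 1 k) a d = dickson a k"
proof (rule Lpoly_eqI)
  show "degree (dickson a k) \<le> d" using degree_dickson[of a k] assms(2) by simp
qed (simp add: pcompose_dickson_char2[OF assms(1)] Dpoly_monom_1)

lemma pderiv_linear_power_odd_char2:
  fixes c :: "'a::idom"
  assumes "(2::'a) = 0" and "odd k"
  shows "pderiv ([:c, 1:] ^ k) = [:c, 1:] ^ (k - 1)"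
proof -
  obtain j where "k = 2 * j + 1" using \<open>odd k\<close> by (rule oddE)
  then have "(of_nat k :: 'a) = 1" using assms(1) by simp
  then show ?thesis by (simp add: pderiv_power pderiv_pCons)
qed

lemma pderiv_dickson_odd_char2:
  fixes a :: "'a::field"
  assumes char2: "(2::'a) = 0" and "a \<noteq> 0"
  shows "pderiv (dickson a (2 * d + 1)) = smult (inverse a) (dickson a d ^ 2)"
proof -
  define q u v where "q = [:0, a, 1:]" and "u = [:a, 1::'a:]" and "v = [:0, 1::'a:]"
  have odd_exp: "odd (2 * d + 1)" by simp
  have "pderiv q = [:a:]" using char2 by (simp add: q_def pderiv_pCons)
  then have "pcompose (smult a (pderiv (dickson a (2 * d + 1)))) q
      = pderiv (pcompose (dickson a (2 * d + 1)) q)"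
    by (simp add: pderiv_pcompose pcompose_smult mult.commute)
  also have "\<dots> = u ^ (2 * d) + v ^ (2 * d)"
    unfolding q_def u_def v_def pcompose_dickson_char2[OF char2] pderiv_add
      pderiv_linear_power_odd_char2[OF char2 odd_exp]
    by simp
  also have "\<dots> = pcompose (dickson a d ^ 2) q"
    using char2_power2_add[OF char2_poly[OF char2], of "u ^ d" "v ^ d"]
    by (simp add: q_def u_def v_def pcompose_power pcompose_dickson_char2[OF char2] power_mult
        mult.commute)
  finally have "smult a (pderiv (dickson a (2 * d + 1))) = dickson a d ^ 2"
    using pcompose_eq_0[of "smult a (pderiv (dickson a (2 * d + 1))) - dickson a d ^ 2" q]
    by (simp add: q_def pcompose_diff)
  then show ?thesis using assms(2) by (metis smult_smult left_inverse smult_1_left)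
qed

lemma no_double_root_dickson_odd_char2:
  fixes a :: "'a::alg_closed_field"
  assumes char2: "(2::'a) = 0" and "a \<noteq> 0" and "odd d"
  shows "\<not> (poly (dickson a d) y = 0 \<and> poly (pderiv (dickson a d)) y = 0)"
proof
  assume double: "poly (dickson a d) y = 0 \<and> poly (pderiv (dickson a d)) y = 0"
  define q where "q = [:0, a, 1:]"
  obtain x where "poly [:-y, a, 1:] x = 0"
    using alg_closed_imp_poly_has_root[of "[:-y, a, 1:]"] by auto
  then have x: "poly q x = y" by (simp add: q_def algebra_simps)
  have comp: "poly (pcompose (dickson a d) q) x = (a + x) ^ d + x ^ d"
    by (simp add: q_def pcompose_dickson_char2[OF char2])
  have "pderiv (pcompose (dickson a d) q) = pcompose (pderiv (dickson a d)) q * [:a:]"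
    using char2 by (simp add: pderiv_pcompose q_def pderiv_pCons)
  also have "pderiv (pcompose (dickson a d) q) = [:a, 1:] ^ (d - 1) + [:0, 1:] ^ (d - 1)"
    unfolding q_def pcompose_dickson_char2[OF char2] pderiv_add
      pderiv_linear_power_odd_char2[OF char2 \<open>odd d\<close>] ..
  finally have "poly (pcompose (pderiv (dickson a d)) q * [:a:]) x
      = poly ([:a, 1:] ^ (d - 1) + [:0, 1:] ^ (d - 1)) x" by simp
  then have comp': "a * poly (pcompose (pderiv (dickson a d)) q) x = (a + x) ^ (d - 1) + x ^ (d - 1)"
    by simp
  have "(a + x) ^ d = x ^ d" and "(a + x) ^ (d - 1) = x ^ (d - 1)"
    using comp comp' double x by (simp_all add: poly_pcompose char2_add_eq_0_iff[OF char2])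
  then have "x ^ d = a * x ^ (d - 1) + x ^ d"
    using \<open>odd d\<close> by (metis (no_types) distrib_right odd_pos power_eq_if not_gr0)
  then have "x ^ (d - 1) = 0" using \<open>a \<noteq> 0\<close> by simp
  then show False
    using \<open>(a + x) ^ d = x ^ d\<close> \<open>a \<noteq> 0\<close> \<open>odd d\<close> by (cases d) auto
qed

lemma order_le_1_if_not_double_root:
  fixes p :: "'a::idom poly"
  assumes "\<not> (poly p y = 0 \<and> poly (pderiv p) y = 0)"
  shows "order y p \<le> 1"
proof (rule ccontr)
  assume "\<not> order y p \<le> 1"
  then have "[:-y, 1:] ^ 2 dvd p" by (simp add: order_divides)
  then obtain r where r: "p = [:-y, 1:] ^ 2 * r" by (elim dvdE)
  have "poly p y = 0 \<and> poly (pderiv p) y = 0"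
    unfolding r power2_eq_square pderiv_mult poly_add poly_mult by simp
  with assms show False by blast
qed

lemma dickson_ne_0_char2:
  fixes a :: "'a::idom"
  assumes char2: "(2::'a) = 0" and "a \<noteq> 0" and "d > 0"
  shows "dickson a d \<noteq> 0"
proof -
  have "poly (dickson a d) 0 = poly (pcompose (dickson a d) [:0, a, 1:]) 0"
    by (simp add: poly_pcompose)
  also have "\<dots> = a ^ d"
    using \<open>d > 0\<close> by (simp add: pcompose_dickson_char2[OF char2])
  finally show ?thesis using \<open>a \<noteq> 0\<close> by auto
qed

lemma double_roots_pderiv_dickson_char2:
  fixes a :: "'a::alg_closed_field"
  assumes char2: "(2::'a) = 0" and "a \<noteq> 0" and "odd d"
  shows "{y. order y (pderiv (dickson a (2 * d + 1))) = 2} = {y. poly (dickson a d) y = 0}"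
proof -
  have H: "dickson a d \<noteq> 0"
    using dickson_ne_0_char2[OF char2 \<open>a \<noteq> 0\<close> odd_pos[OF \<open>odd d\<close>]] .
  have order_pderiv: "order y (pderiv (dickson a (2 * d + 1))) = 2 * order y (dickson a d)" for y
    unfolding pderiv_dickson_odd_char2[OF char2 \<open>a \<noteq> 0\<close>]
    using H \<open>a \<noteq> 0\<close> by (simp add: order_smult order_mult power2_eq_square)
  have simple: "order y (dickson a d) \<le> 1" for y
    by (rule order_le_1_if_not_double_root, rule no_double_root_dickson_odd_char2[OF assms])
  have "order y (pderiv (dickson a (2 * d + 1))) = 2 \<longleftrightarrow> poly (dickson a d) y = 0" for y
    using order_pderiv[of y] simple[of y] order_root[of "dickson a d" y] H by auto
  then show ?thesis by blast
qed

lemma char2_root_param: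
  fixes a \<theta> :: "'a::field"
  assumes char2: "(2::'a) = 0" and "\<theta> \<noteq> 1"
  shows "a + a / (1 + \<theta>) = \<theta> * (a / (1 + \<theta>))"
    and "poly [:0, a, 1:] (a / (1 + \<theta>)) = a\<^sup>2 / (1 + \<theta>) + a\<^sup>2 / (1 + \<theta>\<^sup>2)"
proof -
  have nz: "1 + \<theta> \<noteq> 0" using \<open>\<theta> \<noteq> 1\<close> char2_add_eq_0_iff[OF char2] by metis
  have "a + a / (1 + \<theta>) = (\<theta> + 2) * (a / (1 + \<theta>))"
    using nz by (simp add: field_simps)
  then show "a + a / (1 + \<theta>) = \<theta> * (a / (1 + \<theta>))" using char2 by simp
  have "poly [:0, a, 1:] (a / c) = a\<^sup>2 / c + a\<^sup>2 / c\<^sup>2" if "c \<noteq> 0" for c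
    using that by (simp add: field_simps power2_eq_square)
  then have "poly [:0, a, 1:] (a / (1 + \<theta>)) = a\<^sup>2 / (1 + \<theta>) + a\<^sup>2 / (1 + \<theta>)\<^sup>2"
    using nz .
  then show "poly [:0, a, 1:] (a / (1 + \<theta>)) = a\<^sup>2 / (1 + \<theta>) + a\<^sup>2 / (1 + \<theta>\<^sup>2)"
    by (simp add: char2_power2_add[OF char2])
qed

lemma poly_dickson_root_char2:
  fixes a \<theta> :: "'a::field"
  assumes char2: "(2::'a) = 0" and "\<theta> ^ d = 1" and "\<theta> \<noteq> 1"
  shows "poly (dickson a d) (a\<^sup>2 / (1 + \<theta>) + a\<^sup>2 / (1 + \<theta>\<^sup>2)) = 0"
proof -
  define x where "x = a / (1 + \<theta>)"
  have "poly (dickson a d) (a\<^sup>2 / (1 + \<theta>) + a\<^sup>2 / (1 + \<theta>\<^sup>2))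
      = poly (pcompose (dickson a d) [:0, a, 1:]) x"
    using char2_root_param(2)[OF char2 \<open>\<theta> \<noteq> 1\<close>] by (simp add: poly_pcompose x_def)
  also have "\<dots> = (\<theta> * x) ^ d + x ^ d"
    using char2_root_param(1)[OF char2 \<open>\<theta> \<noteq> 1\<close>]
    by (simp add: pcompose_dickson_char2[OF char2] x_def)
  also have "\<dots> = 2 * x ^ d" using \<open>\<theta> ^ d = 1\<close> by (simp add: power_mult_distrib)
  finally show ?thesis using char2 by simp
qed

lemma inj_on_dickson_root_param_char2:
  fixes a :: "'a::field" and \<theta> :: "'b \<Rightarrow> 'a"
  assumes char2: "(2::'a) = 0" and "a \<noteq> 0"
    and ne1: "\<And>i. i \<in> I \<Longrightarrow> \<theta> i \<noteq> 1" and inj: "inj_on \<theta> I"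
    and inv: "\<And>i j. i \<in> I \<Longrightarrow> j \<in> I \<Longrightarrow> i \<noteq> j \<Longrightarrow> \<theta> i * \<theta> j \<noteq> 1"
  shows "inj_on (\<lambda>i. a\<^sup>2 / (1 + \<theta> i) + a\<^sup>2 / (1 + (\<theta> i)\<^sup>2)) I"
proof (rule inj_onI)
  fix i j
  assume i: "i \<in> I" and j: "j \<in> I"
    and eq: "a\<^sup>2 / (1 + \<theta> i) + a\<^sup>2 / (1 + (\<theta> i)\<^sup>2) = a\<^sup>2 / (1 + \<theta> j) + a\<^sup>2 / (1 + (\<theta> j)\<^sup>2)"
  define x where "x k = a / (1 + \<theta> k)" for k
  have nz: "1 + \<theta> k \<noteq> 0" if "k \<in> I" for k
    using ne1[OF that] char2_add_eq_0_iff[OF char2] by metis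
  have "(x i - x j) * (x i + x j + a) = poly [:0, a, 1:] (x i) - poly [:0, a, 1:] (x j)"
    by (simp add: algebra_simps)
  also have "\<dots> = 0"
    using eq char2_root_param(2)[OF char2 ne1[OF i]] char2_root_param(2)[OF char2 ne1[OF j]]
    by (simp add: x_def)
  finally have "x i - x j = 0 \<or> (a + x i) + x j = 0" by (simp add: ac_simps)
  then consider "x i = x j" | "x j = a + x i"
    using char2_add_eq_0_iff[OF char2, of "a + x i" "x j"] by auto
  then show "i = j"
  proof cases
    case 1
    then have "\<theta> i = \<theta> j" using nz[OF i] nz[OF j] \<open>a \<noteq> 0\<close> by (simp add: x_def field_simps)
    then show ?thesis using inj i j by (meson inj_onD)
  next
    case 2
    also have "a + x i = \<theta> i * x i"
      unfolding x_def by (rule char2_root_param(1)[OF char2 ne1[OF i]])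
    finally have "1 + \<theta> i = \<theta> i * (1 + \<theta> j)"
      using nz[OF i] nz[OF j] \<open>a \<noteq> 0\<close> by (simp add: x_def field_simps)
    then have "\<theta> i * \<theta> j = 1" by (simp add: algebra_simps)
    then show ?thesis using inv i j by blast
  qed
qed

lemma dickson_roots_char2:
  fixes a :: "'a::field" and \<theta> :: "'b \<Rightarrow> 'a"
  assumes char2: "(2::'a) = 0" and "a \<noteq> 0" and "d > 0"
    and "finite I" and "card I = d div 2"
    and root: "\<And>i. i \<in> I \<Longrightarrow> \<theta> i ^ d = 1"
    and ne1: "\<And>i. i \<in> I \<Longrightarrow> \<theta> i \<noteq> 1" and inj: "inj_on \<theta> I"
    and inv: "\<And>i j. i \<in> I \<Longrightarrow> j \<in> I \<Longrightarrow> i \<noteq> j \<Longrightarrow> \<theta> i * \<theta> j \<noteq> 1"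
  shows "{y. poly (dickson a d) y = 0} = (\<lambda>i. a\<^sup>2 / (1 + \<theta> i) + a\<^sup>2 / (1 + (\<theta> i)\<^sup>2)) ` I"
    (is "?roots = ?\<tau> ` I")
proof -
  have H: "dickson a d \<noteq> 0" using dickson_ne_0_char2[OF char2 \<open>a \<noteq> 0\<close> \<open>d > 0\<close>] .
  have "?\<tau> ` I \<subseteq> ?roots" using poly_dickson_root_char2[OF char2 root ne1] by blast
  moreover have "card ?roots \<le> card (?\<tau> ` I)"
  proof -
    have "card ?roots \<le> degree (dickson a d)" by (rule card_poly_roots_bound[OF H])
    also have "\<dots> \<le> card I" using degree_dickson[of a d] \<open>card I = d div 2\<close> by simp
    also have "\<dots> = card (?\<tau> ` I)"
      using card_image[OF inj_on_dickson_root_param_char2[OF char2 \<open>a \<noteq> 0\<close> ne1 inj inv]]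
      by simp
    finally show ?thesis .
  qed
  ultimately show ?thesis using card_seteq[OF poly_roots_finite[OF H]] by blast
qed

theorem lemma2p5:
  fixes \<alpha> :: "'a::alg_closed_field"
    and m n :: nat
    and \<theta> :: "nat \<Rightarrow> 'a"
  assumes char2: "CHAR('a) = 2"
    and m8: "m \<ge> 8" and m4: "m mod 4 = 0"
    and n1: "n \<ge> 1"
    and alpha_F: "\<alpha> ^ (2 ^ n) = \<alpha>" and alpha_nz: "\<alpha> \<noteq> 0"
    and theta_root: "\<And>i. i \<in> {1..((m - 2) div 2 - 1) div 2} \<Longrightarrow> \<theta> i ^ ((m - 2) div 2) = 1"
    and theta_ne1: "\<And>i. i \<in> {1..((m - 2) div 2 - 1) div 2} \<Longrightarrow> \<theta> i \<noteq> 1"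
    and theta_inj: "inj_on \<theta> {1..((m - 2) div 2 - 1) div 2}"
    and theta_inv: "\<And>i j. i \<in> {1..((m - 2) div 2 - 1) div 2} \<Longrightarrow> j \<in> {1..((m - 2) div 2 - 1) div 2}
                      \<Longrightarrow> i \<noteq> j \<Longrightarrow> \<theta> i * \<theta> j \<noteq> 1"
  shows "{x. order x (pderiv (Lpoly (monom 1 (m - 1)) \<alpha> ((m - 2) div 2))) = 2}
           = (\<lambda>i. \<alpha>\<^sup>2 / (1 + \<theta> i) + \<alpha>\<^sup>2 / (1 + (\<theta> i)\<^sup>2)) ` {1..((m - 2) div 2 - 1) div 2}
         \<and> card {x. order x (pderiv (Lpoly (monom 1 (m - 1)) \<alpha> ((m - 2) div 2))) = 2}
           = ((m - 2) div 2 - 1) div 2"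
proof -
  define d where "d = (m - 2) div 2"
  define I where "I = {1..((m - 2) div 2 - 1) div 2}"
  have two: "(2::'a) = 0" using of_nat_CHAR[where 'a = 'a] char2 by simp
  have "odd d" and m_minus_1: "m - 1 = 2 * d + 1"
    using m8 m4 unfolding d_def by presburger+
  then have card_I: "card I = d div 2"
    unfolding I_def d_def[symmetric] by simp presburger
  have root: "\<And>i. i \<in> I \<Longrightarrow> \<theta> i ^ d = 1"
    and ne1: "\<And>i. i \<in> I \<Longrightarrow> \<theta> i \<noteq> 1"
    and inj: "inj_on \<theta> I"
    and inv: "\<And>i j. i \<in> I \<Longrightarrow> j \<in> I \<Longrightarrow> i \<noteq> j \<Longrightarrow> \<theta> i * \<theta> j \<noteq> 1"
    using theta_root theta_ne1 theta_inj theta_inv unfolding d_def I_def by auto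
  have "Lpoly (monom 1 (m - 1)) \<alpha> d = dickson \<alpha> (2 * d + 1)"
    unfolding m_minus_1 by (rule Lpoly_monom_1_char2[OF two]) simp
  then have "{x. order x (pderiv (Lpoly (monom 1 (m - 1)) \<alpha> d)) = 2} = {y. poly (dickson \<alpha> d) y = 0}"
    using double_roots_pderiv_dickson_char2[OF two alpha_nz \<open>odd d\<close>] by simp
  also have "\<dots> = (\<lambda>i. \<alpha>\<^sup>2 / (1 + \<theta> i) + \<alpha>\<^sup>2 / (1 + (\<theta> i)\<^sup>2)) ` I"
    using dickson_roots_char2[OF two alpha_nz odd_pos[OF \<open>odd d\<close>] _ card_I root ne1 inj inv]
    by (simp add: I_def)
  moreover have "card \<dots> = card I"
    using card_image[OF inj_on_dickson_root_param_char2[OF two alpha_nz ne1 inj inv]] .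
  ultimately show ?thesis using card_I by (simp add: d_def I_def)
qed

end
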